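(* Let $(\mathscr F,\Gamma),(\mathscr G,\Lambda)\colon(\mathcal C,\mathbb E,\mathfrak s)\to(\mathcal D,\mathbb F,\mathfrak t)$ be $n$-exangulated functors and $\beth\colon(\mathscr F,\Gamma)\Rightarrow(\mathscr G,\Lambda)$ an $n$-exangulated natural transformation. Then $$\widetilde{\langle\beth\rangle}\circ_h\mathrm{id}_{\mathsf{Shin}_{(\mathcal C,\mathbb E)}}=\mathrm{id}_{\mathsf{Shin}_{(\mathcal D,\mathbb F)}}\circ_h\langle\widetilde\beth\rangle$$ as natural transformations from $\widetilde{\mathsf E_{(\mathscr F,\Gamma)}}\circ\mathsf{Shin}_{(\mathcal C,\mathbb E)}=\mathsf{Shin}_{(\mathcal D,\mathbb F)}\circ\mathsf E_{(\widetilde{\mathscr F},\widetilde\Gamma)}$ to $\widetilde{\mathsf E_{(\mathscr G,\Lambda)}}\circ\mathsf{Shin}_{(\mathcal C,\mathbb E)}=\mathsf{Shin}_{(\mathcal D,\mathbb F)}\circ\mathsf E_{(\widetilde{\mathscr G},\widetilde\Lambda)}$ (functors $\widetilde{\mathbb E}\text{-}\mathrm{Ext}(\widetilde{\mathcal C})\to\widetilde{\mathbb F\text{-}\mathrm{Ext}(\mathcal D)}$).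
   Context: $n\ge1$; $n$-exangulated categories in the sense of Herschend–Liu–Nakaoka. $a_*\alpha=\mathbb E(C,a)(\alpha)$, $c^*\alpha=\mathbb E(c,A)(\alpha)$. $n$-exangulated functor $(\mathscr F,\Gamma)$: additive $\mathscr F$ with natural $\Gamma\colon\mathbb E(-,-)\Rightarrow\mathbb F(\mathscr F-,\mathscr F-)$ sending realisations to realisations ($\mathfrak s(\alpha)=[X_\bullet]\Rightarrow\mathfrak t(\Gamma\alpha)=[\mathscr FX_\bullet]$). $n$-exangulated natural transformation: natural $\beth\colon\mathscr F\Rightarrow\mathscr G$ with $(\beth_A)_*\Gamma(\alpha)=(\beth_C)^*\Lambda(\alpha)$ for all $\alpha\in\mathbb E(C,A)$. $\mathbb E\text{-}\mathrm{Ext}(\mathcal C)$: objects $\alpha\in\mathbb E(C,A)$; morphisms $(a,c)\colon\alpha\to\beta\in\mathbb E(D,B)$ with $a_*\alpha=c^*\beta$. $\mathsf E_{(\mathscr F,\Gamma)}\colon\alpha\mapsto\Gamma(\alpha)$, $(a,c)\mapsto(\mathscr Fa,\mathscr Fc)$; $\langle\beth\rangle\colon\mathsf E_{(\mathscr F,\Gamma)}\Rightarrow\mathsf E_{(\mathscr G,\Lambda)}$ has components $\langle\beth\rangle_\alpha=(\beth_A,\beth_C)$. Idempotent completion $\widetilde{\mathcal A}$: objects $(X,e)$, morphisms $(e_Y,f,e_X)$ with $fe_X=f=e_Yf$, composition $(e_Z,g,e_Y)(e_Y,f,e_X)=(e_Z,gf,e_X)$; for an additive functor $\mathscr H$, $\widetilde{\mathscr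 H}(X,e)=(\mathscr HX,\mathscr He)$, $\widetilde{\mathscr H}(e_Y,f,e_X)=(\mathscr He_Y,\mathscr Hf,\mathscr He_X)$; for a natural transformation $\theta\colon\mathscr H\Rightarrow\mathscr K$, $\widetilde\theta_{(X,e)}=(\mathscr Ke,(\mathscr Ke)\theta_X(\mathscr He),\mathscr He)$. $\widetilde{\mathbb E}((C,e_C),(A,e_A))=\{(e_A,\alpha,e_C)\mid(e_A)_*\alpha=\alpha=(e_C)^*\alpha\}$, with $\widetilde{\mathbb E}((e_C,d,e_D),(e_B,a,e_A))(e_A,\alpha,e_C)=(e_B,\mathbb E(d,a)\alpha,e_D)$; $\widetilde\Gamma(e_A,\alpha,e_C)=(\mathscr Fe_A,\Gamma(\alpha),\mathscr Fe_C)$; the $n$-exangulated structure $(\widetilde{\mathcal C},\widetilde{\mathbb E},\widetilde{\mathfrak s})$ is that of Klapproth–Msapato–Shah. $\mathsf{Shin}_{(\mathcal C,\mathbb E)}\colon\widetilde{\mathbb E}\text{-}\mathrm{Ext}(\widetilde{\mathcal C})\to\widetilde{\mathbb E\text{-}\mathrm{Ext}(\mathcal C)}$ is $(e_A,\alpha,e_C)\mapsto(\alpha,(e_A,e_C))$, $((e_B,a,e_A),(e_D,c,e_C))\mapsto((e_B,e_D),(a,c),(e_A,e_C))$. Horizontal composition: $(\daleth\circ_h\theta)_X=\daleth_{\mathscr KX}\circ\mathscr L(\theta_X)$ for $\theta\colon\mathscr H\Rightarrow\mathscr K$, $\daleth\colon\mathscr L\Rightarrow\mathscr M$. *)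

theory Defs
  imports Main
begin

section \<open>Categories (morphisms carry domain and codomain)\<close>

record ('o,'m) cat =
  Obj :: "'o set"
  Mor :: "'m set"
  Dom :: "'m \<Rightarrow> 'o"
  Cod :: "'m \<Rightarrow> 'o"
  Idm :: "'o \<Rightarrow> 'm"
  Cmp :: "'m \<Rightarrow> 'm \<Rightarrow> 'm"   (* Cmp C g f = g \<circ> f *)

definition hom :: "('o,'m,'x) cat_scheme \<Rightarrow> 'o \<Rightarrow> 'o \<Rightarrow> 'm set" where
  "hom C X Y = {f \<in> Mor C. Dom C f = X \<and> Cod C f = Y}"

definition category :: "('o,'m,'x) cat_scheme \<Rightarrow> bool" where
  "category C \<longleftrightarrow>
     (\<forall>f\<in>Mor C. Dom C f \<in> Obj C \<and> Cod C f \<in> Obj C) \<and>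
     (\<forall>X\<in>Obj C. Idm C X \<in> hom C X X) \<and>
     (\<forall>X Y Z f g. f \<in> hom C X Y \<longrightarrow> g \<in> hom C Y Z \<longrightarrow> Cmp C g f \<in> hom C X Z) \<and>
     (\<forall>W X Y Z f g h. f \<in> hom C W X \<longrightarrow> g \<in> hom C X Y \<longrightarrow> h \<in> hom C Y Z \<longrightarrow>
          Cmp C h (Cmp C g f) = Cmp C (Cmp C h g) f) \<and>
     (\<forall>X Y f. f \<in> hom C X Y \<longrightarrow> Cmp C (Idm C Y) f = f \<and> Cmp C f (Idm C X) = f)"

record ('o,'m) addcat = "('o,'m) cat" +
  Add :: "'m \<Rightarrow> 'm \<Rightarrow> 'm"
  Zer :: "'o \<Rightarrow> 'o \<Rightarrow> 'm"
  Neg :: "'m \<Rightarrow> 'm"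

definition zero_object :: "('o,'m,'x) addcat_scheme \<Rightarrow> 'o \<Rightarrow> bool" where
  "zero_object C z \<longleftrightarrow> z \<in> Obj C \<and>
     (\<forall>X\<in>Obj C. hom C z X = {Zer C z X} \<and> hom C X z = {Zer C X z})"

definition biproduct :: "('o,'m,'x) addcat_scheme \<Rightarrow> 'o \<Rightarrow> 'o \<Rightarrow> 'o \<Rightarrow> 'm \<Rightarrow> 'm \<Rightarrow> 'm \<Rightarrow> 'm \<Rightarrow> bool" where
  "biproduct C Z X Y i1 i2 p1 p2 \<longleftrightarrow>
     i1 \<in> hom C X Z \<and> i2 \<in> hom C Y Z \<and> p1 \<in> hom C Z X \<and> p2 \<in> hom C Z Y \<and>
     Cmp C p1 i1 = Idm C X \<and> Cmp C p2 i2 = Idm C Y \<and>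
     Cmp C p1 i2 = Zer C Y X \<and> Cmp C p2 i1 = Zer C X Y \<and>
     Add C (Cmp C i1 p1) (Cmp C i2 p2) = Idm C Z"

definition additive :: "('o,'m,'x) addcat_scheme \<Rightarrow> bool" where
  "additive C \<longleftrightarrow> category C \<and>
     (\<forall>X\<in>Obj C. \<forall>Y\<in>Obj C.
        Zer C X Y \<in> hom C X Y \<and>
        (\<forall>f\<in>hom C X Y. \<forall>g\<in>hom C X Y. Add C f g \<in> hom C X Y \<and> Add C f g = Add C g f) \<and>
        (\<forall>f\<in>hom C X Y. \<forall>g\<in>hom C X Y. \<forall>h\<in>hom C X Y. Add C (Add C f g) h = Add C f (Add C g h)) \<and>
        (\<forall>f\<in>hom C X Y. Add C f (Zer C X Y) = f \<and> Neg C f \<in> hom C X Y \<and> Add C f (Neg C f) = Zer C X Y)) \<and>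
     (\<forall>X Y Z f f' g. f \<in> hom C X Y \<longrightarrow> f' \<in> hom C X Y \<longrightarrow> g \<in> hom C Y Z \<longrightarrow>
          Cmp C g (Add C f f') = Add C (Cmp C g f) (Cmp C g f')) \<and>
     (\<forall>X Y Z f g g'. f \<in> hom C X Y \<longrightarrow> g \<in> hom C Y Z \<longrightarrow> g' \<in> hom C Y Z \<longrightarrow>
          Cmp C (Add C g g') f = Add C (Cmp C g f) (Cmp C g' f)) \<and>
     (\<exists>z. zero_object C z) \<and>
     (\<forall>X\<in>Obj C. \<forall>Y\<in>Obj C. \<exists>Z i1 i2 p1 p2. biproduct C Z X Y i1 i2 p1 p2)"

section \<open>Biadditive functors E : C^op x C \<rightarrow> Ab\<close>

text \<open>An element alpha of E(C,A) is represented by an element of Ext with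
  Src alpha = C and Tgt alpha = A. Push a alpha = a_* alpha, Pull c alpha = c^* alpha.\<close>

record ('o,'m,'e) extb =
  Ext :: "'e set"
  Src :: "'e \<Rightarrow> 'o"
  Tgt :: "'e \<Rightarrow> 'o"
  EAdd :: "'e \<Rightarrow> 'e \<Rightarrow> 'e"
  EZer :: "'o \<Rightarrow> 'o \<Rightarrow> 'e"   (* EZer C A = zero of E(C,A) *)
  ENeg :: "'e \<Rightarrow> 'e"
  Push :: "'m \<Rightarrow> 'e \<Rightarrow> 'e"
  Pull :: "'m \<Rightarrow> 'e \<Rightarrow> 'e"

definition ext :: "('o,'m,'e,'x) extb_scheme \<Rightarrow> 'o \<Rightarrow> 'o \<Rightarrow> 'e set" where
  "ext E C A = {\<alpha> \<in> Ext E. Src E \<alpha> = C \<and> Tgt E \<alpha> = A}"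

definition biadditive :: "('o,'m,'x) addcat_scheme \<Rightarrow> ('o,'m,'e,'y) extb_scheme \<Rightarrow> bool" where
  "biadditive C E \<longleftrightarrow>
     (\<forall>\<alpha>\<in>Ext E. Src E \<alpha> \<in> Obj C \<and> Tgt E \<alpha> \<in> Obj C) \<and>
     (\<forall>X\<in>Obj C. \<forall>A\<in>Obj C.
        EZer E X A \<in> ext E X A \<and>
        (\<forall>\<alpha>\<in>ext E X A. \<forall>\<beta>\<in>ext E X A. EAdd E \<alpha> \<beta> \<in> ext E X A \<and> EAdd E \<alpha> \<beta> = EAdd E \<beta> \<alpha>) \<and>
        (\<forall>\<alpha>\<in>ext E X A. \<forall>\<beta>\<in>ext E X A. \<forall>\<gamma>\<in>ext E X A.
            EAdd E (EAdd E \<alpha> \<beta>) \<gamma> = EAdd E \<alpha> (EAdd E \<beta> \<gamma>)) \<and>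
        (\<forall>\<alpha>\<in>ext E X A. EAdd E \<alpha> (EZer E X A) = \<alpha> \<and> ENeg E \<alpha> \<in> ext E X A \<and>
            EAdd E \<alpha> (ENeg E \<alpha>) = EZer E X A)) \<and>
     (\<forall>A B X a \<alpha>. a \<in> hom C A B \<longrightarrow> \<alpha> \<in> ext E X A \<longrightarrow> Push E a \<alpha> \<in> ext E X B) \<and>
     (\<forall>A X \<alpha>. \<alpha> \<in> ext E X A \<longrightarrow> Push E (Idm C A) \<alpha> = \<alpha>) \<and>
     (\<forall>A B B' X a b \<alpha>. a \<in> hom C A B \<longrightarrow> b \<in> hom C B B' \<longrightarrow> \<alpha> \<in> ext E X A \<longrightarrow>
          Push E (Cmp C b a) \<alpha> = Push E b (Push E a \<alpha>)) \<and>
     (\<forall>A B X a \<alpha> \<beta>. a \<in> hom C A B \<longrightarrow> \<alpha> \<in> ext E X A \<longrightarrow> \<beta> \<in> ext E X A \<longrightarrow>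
          Push E a (EAdd E \<alpha> \<beta>) = EAdd E (Push E a \<alpha>) (Push E a \<beta>)) \<and>
     (\<forall>A B X a a' \<alpha>. a \<in> hom C A B \<longrightarrow> a' \<in> hom C A B \<longrightarrow> \<alpha> \<in> ext E X A \<longrightarrow>
          Push E (Add C a a') \<alpha> = EAdd E (Push E a \<alpha>) (Push E a' \<alpha>)) \<and>
     (\<forall>A X Y c \<alpha>. c \<in> hom C Y X \<longrightarrow> \<alpha> \<in> ext E X A \<longrightarrow> Pull E c \<alpha> \<in> ext E Y A) \<and>
     (\<forall>A X \<alpha>. \<alpha> \<in> ext E X A \<longrightarrow> Pull E (Idm C X) \<alpha> = \<alpha>) \<and>
     (\<forall>A X Y Y' c d \<alpha>. c \<in> hom C Y X \<longrightarrow> d \<in> hom C Y' Y \<longrightarrow> \<alpha> \<in> ext E X A \<longrightarrow>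
          Pull E (Cmp C c d) \<alpha> = Pull E d (Pull E c \<alpha>)) \<and>
     (\<forall>A X Y c \<alpha> \<beta>. c \<in> hom C Y X \<longrightarrow> \<alpha> \<in> ext E X A \<longrightarrow> \<beta> \<in> ext E X A \<longrightarrow>
          Pull E c (EAdd E \<alpha> \<beta>) = EAdd E (Pull E c \<alpha>) (Pull E c \<beta>)) \<and>
     (\<forall>A X Y c c' \<alpha>. c \<in> hom C Y X \<longrightarrow> c' \<in> hom C Y X \<longrightarrow> \<alpha> \<in> ext E X A \<longrightarrow>
          Pull E (Add C c c') \<alpha> = EAdd E (Pull E c \<alpha>) (Pull E c' \<alpha>)) \<and>
     (\<forall>A B X Y a c \<alpha>. a \<in> hom C A B \<longrightarrow> c \<in> hom C Y X \<longrightarrow> \<alpha> \<in> ext E X A \<longrightarrow>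
          Push E a (Pull E c \<alpha>) = Pull E c (Push E a \<alpha>))"

section \<open>Complexes X_0 --d_0--> X_1 --> ... --d_n--> X_(n+1)\<close>

definition is_complex :: "nat \<Rightarrow> ('o,'m,'x) addcat_scheme \<Rightarrow> (nat \<Rightarrow> 'o) \<Rightarrow> (nat \<Rightarrow> 'm) \<Rightarrow> bool" where
  "is_complex n C X d \<longleftrightarrow>
     (\<forall>i\<le>Suc n. X i \<in> Obj C) \<and> (\<forall>i\<le>n. d i \<in> hom C (X i) (X (Suc i))) \<and>
     (\<forall>i<n. Cmp C (d (Suc i)) (d i) = Zer C (X i) (X (Suc (Suc i))))"

definition cx_morph :: "nat \<Rightarrow> ('o,'m,'x) addcat_scheme \<Rightarrow> (nat \<Rightarrow> 'o) \<Rightarrow> (nat \<Rightarrow> 'm)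
    \<Rightarrow> (nat \<Rightarrow> 'o) \<Rightarrow> (nat \<Rightarrow> 'm) \<Rightarrow> (nat \<Rightarrow> 'm) \<Rightarrow> bool" where
  "cx_morph n C X dX Y dY f \<longleftrightarrow>
     (\<forall>i\<le>Suc n. f i \<in> hom C (X i) (Y i)) \<and>
     (\<forall>i\<le>n. Cmp C (dY i) (f i) = Cmp C (f (Suc i)) (dX i))"

definition cx_homotopic :: "nat \<Rightarrow> ('o,'m,'x) addcat_scheme \<Rightarrow> (nat \<Rightarrow> 'o) \<Rightarrow> (nat \<Rightarrow> 'm)
    \<Rightarrow> (nat \<Rightarrow> 'o) \<Rightarrow> (nat \<Rightarrow> 'm) \<Rightarrow> (nat \<Rightarrow> 'm) \<Rightarrow> (nat \<Rightarrow> 'm) \<Rightarrow> bool" where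
  "cx_homotopic n C X dX Y dY f g \<longleftrightarrow>
     (\<exists>h. (\<forall>i. 1 \<le> i \<and> i \<le> Suc n \<longrightarrow> h i \<in> hom C (X i) (Y (i - 1))) \<and>
          (\<forall>i\<le>Suc n. Add C (f i) (Neg C (g i)) =
              Add C (if i = 0 then Zer C (X i) (Y i) else Cmp C (dY (i - 1)) (h i))
                    (if i = Suc n then Zer C (X i) (Y i) else Cmp C (h (Suc i)) (dX i))))"

text \<open>Homotopy equivalence in C^(n+2)_(A,C): isomorphism in the homotopy category of
  complexes with fixed end terms, morphisms being the identity at both ends.\<close>
definition htpy_equiv :: "nat \<Rightarrow> ('o,'m,'x) addcat_scheme \<Rightarrow> (nat \<Rightarrow> 'o) \<Rightarrow> (nat \<Rightarrow> 'm)
    \<Rightarrow> (nat \<Rightarrow> 'o) \<Rightarrow> (nat \<Rightarrow> 'm) \<Rightarrow> bool" where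
  "htpy_equiv n C X dX Y dY \<longleftrightarrow> is_complex n C X dX \<and> is_complex n C Y dY \<and>
     (\<exists>f g. cx_morph n C X dX Y dY f \<and> cx_morph n C Y dY X dX g \<and>
        f 0 = Idm C (X 0) \<and> f (Suc n) = Idm C (X (Suc n)) \<and>
        g 0 = Idm C (Y 0) \<and> g (Suc n) = Idm C (Y (Suc n)) \<and>
        cx_homotopic n C X dX X dX (\<lambda>i. Cmp C (g i) (f i)) (\<lambda>i. Idm C (X i)) \<and>
        cx_homotopic n C Y dY Y dY (\<lambda>i. Cmp C (f i) (g i)) (\<lambda>i. Idm C (Y i)))"

type_synonym ('e,'o,'m) realisation = "'e \<Rightarrow> (nat \<Rightarrow> 'o) \<Rightarrow> (nat \<Rightarrow> 'm) \<Rightarrow> bool"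
  (* s delta X d  means  s(delta) = [X] *)

definition nexangle :: "nat \<Rightarrow> ('o,'m,'x) addcat_scheme \<Rightarrow> ('o,'m,'e,'y) extb_scheme
    \<Rightarrow> (nat \<Rightarrow> 'o) \<Rightarrow> (nat \<Rightarrow> 'm) \<Rightarrow> 'e \<Rightarrow> bool" where
  "nexangle n C E X d \<delta> \<longleftrightarrow> is_complex n C X d \<and> \<delta> \<in> ext E (X (Suc n)) (X 0) \<and>
     Push E (d 0) \<delta> = EZer E (X (Suc n)) (X 1) \<and> Pull E (d n) \<delta> = EZer E (X n) (X 0) \<and>
     (\<forall>Y\<in>Obj C.
        (\<forall>i. 1 \<le> i \<and> i \<le> n \<longrightarrow>
           {g \<in> hom C Y (X i). Cmp C (d i) g = Zer C Y (X (Suc i))} = (\<lambda>f. Cmp C (d (i - 1)) f) ` hom C Y (X (i - 1))) \<and>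
        {g \<in> hom C Y (X (Suc n)). Pull E g \<delta> = EZer E Y (X 0)} = (\<lambda>f. Cmp C (d n) f) ` hom C Y (X n)) \<and>
     (\<forall>Y\<in>Obj C.
        (\<forall>i. 1 \<le> i \<and> i \<le> n \<longrightarrow>
           {g \<in> hom C (X i) Y. Cmp C g (d (i - 1)) = Zer C (X (i - 1)) Y} = (\<lambda>f. Cmp C f (d i)) ` hom C (X (Suc i)) Y) \<and>
        {g \<in> hom C (X 0) Y. Push E g \<delta> = EZer E (X (Suc n)) Y} = (\<lambda>f. Cmp C f (d 0)) ` hom C (X 1) Y)"

definition is_realisation :: "nat \<Rightarrow> ('o,'m,'x) addcat_scheme \<Rightarrow> ('o,'m,'e,'y) extb_scheme
    \<Rightarrow> ('e,'o,'m) realisation \<Rightarrow> bool" where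
  "is_realisation n C E s \<longleftrightarrow>
     (\<forall>\<delta>\<in>Ext E. (\<exists>X d. s \<delta> X d) \<and>
        (\<forall>X d. s \<delta> X d \<longrightarrow> is_complex n C X d \<and> X 0 = Tgt E \<delta> \<and> X (Suc n) = Src E \<delta>) \<and>
        (\<forall>X d Y e. s \<delta> X d \<longrightarrow> (s \<delta> Y e \<longleftrightarrow> htpy_equiv n C X d Y e)))"

definition R0 :: "nat \<Rightarrow> ('o,'m,'x) addcat_scheme \<Rightarrow> ('o,'m,'e,'y) extb_scheme \<Rightarrow> ('e,'o,'m) realisation \<Rightarrow> bool" where
  "R0 n C E s \<longleftrightarrow>
     (\<forall>\<delta>\<in>Ext E. \<forall>\<delta>'\<in>Ext E. \<forall>a c.
        a \<in> hom C (Tgt E \<delta>) (Tgt E \<delta>') \<longrightarrow> c \<in> hom C (Src E \<delta>) (Src E \<delta>') \<longrightarrow>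
        Push E a \<delta> = Pull E c \<delta>' \<longrightarrow>
        (\<forall>X d Y e. s \<delta> X d \<longrightarrow> s \<delta>' Y e \<longrightarrow>
           (\<exists>f. cx_morph n C X d Y e f \<and> f 0 = a \<and> f (Suc n) = c)))"

definition R1 :: "nat \<Rightarrow> ('o,'m,'x) addcat_scheme \<Rightarrow> ('o,'m,'e,'y) extb_scheme \<Rightarrow> ('e,'o,'m) realisation \<Rightarrow> bool" where
  "R1 n C E s \<longleftrightarrow> (\<forall>\<delta>\<in>Ext E. \<forall>X d. s \<delta> X d \<longrightarrow> nexangle n C E X d \<delta>)"

definition R2 :: "nat \<Rightarrow> ('o,'m,'x) addcat_scheme \<Rightarrow> ('o,'m,'e,'y) extb_scheme \<Rightarrow> ('e,'o,'m) realisation \<Rightarrow> bool" where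
  "R2 n C E s \<longleftrightarrow> (\<forall>A\<in>Obj C. \<forall>z. zero_object C z \<longrightarrow>
     (let X = (\<lambda>i. if i \<le> 1 then A else z) in
        s (EZer E z A) X (\<lambda>i. if i = 0 then Idm C A else Zer C (X i) (X (Suc i)))) \<and>
     (let Y = (\<lambda>i. if n \<le> i then A else z) in
        s (EZer E A z) Y (\<lambda>i. if i = n then Idm C A else Zer C (Y i) (Y (Suc i)))))"

definition s_inflation :: "nat \<Rightarrow> ('o,'m,'e,'y) extb_scheme \<Rightarrow> ('e,'o,'m) realisation \<Rightarrow> 'm \<Rightarrow> bool" where
  "s_inflation n E s f \<longleftrightarrow> (\<exists>\<delta>\<in>Ext E. \<exists>X d. s \<delta> X d \<and> d 0 = f)"

definition s_deflation :: "nat \<Rightarrow> ('o,'m,'e,'y) extb_scheme \<Rightarrow> ('e,'o,'m) realisation \<Rightarrow> 'm \<Rightarrow> bool" where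
  "s_deflation n E s f \<longleftrightarrow> (\<exists>\<delta>\<in>Ext E. \<exists>X d. s \<delta> X d \<and> d n = f)"

definition EA1 :: "nat \<Rightarrow> ('o,'m,'x) addcat_scheme \<Rightarrow> ('o,'m,'e,'y) extb_scheme \<Rightarrow> ('e,'o,'m) realisation \<Rightarrow> bool" where
  "EA1 n C E s \<longleftrightarrow>
     (\<forall>A B D f g. f \<in> hom C A B \<longrightarrow> g \<in> hom C B D \<longrightarrow>
        (s_inflation n E s f \<longrightarrow> s_inflation n E s g \<longrightarrow> s_inflation n E s (Cmp C g f)) \<and>
        (s_deflation n E s f \<longrightarrow> s_deflation n E s g \<longrightarrow> s_deflation n E s (Cmp C g f)))"

text \<open>Mapping cone of f : X \<rightarrow> Y with f_0 = 1:
  X_1 \<rightarrow> X_2 (+) Y_1 \<rightarrow> ... \<rightarrow> X_(n+1) (+) Y_n \<rightarrow> Y_(n+1),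
  differentials [-d^X_1; f_1], [[-d^X_(i+1), 0],[f_(i+1), d^Y_i]], [f_(n+1), d^Y_n].\<close>
definition is_cone :: "nat \<Rightarrow> ('o,'m,'x) addcat_scheme \<Rightarrow> (nat \<Rightarrow> 'o) \<Rightarrow> (nat \<Rightarrow> 'm)
    \<Rightarrow> (nat \<Rightarrow> 'o) \<Rightarrow> (nat \<Rightarrow> 'm) \<Rightarrow> (nat \<Rightarrow> 'm) \<Rightarrow> (nat \<Rightarrow> 'o) \<Rightarrow> (nat \<Rightarrow> 'm) \<Rightarrow> bool" where
  "is_cone n C X dX Y dY f M dM \<longleftrightarrow>
     (\<exists>i1 i2 p1 p2. M 0 = X 1 \<and> M (Suc n) = Y (Suc n) \<and>
        (\<forall>i. 1 \<le> i \<and> i \<le> n \<longrightarrow> biproduct C (M i) (X (Suc i)) (Y i) (i1 i) (i2 i) (p1 i) (p2 i)) \<and>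
        dM 0 = Add C (Cmp C (i1 1) (Neg C (dX 1))) (Cmp C (i2 1) (f 1)) \<and>
        (\<forall>i. 1 \<le> i \<and> i < n \<longrightarrow>
           dM i = Add C (Add C (Cmp C (i1 (Suc i)) (Cmp C (Neg C (dX (Suc i))) (p1 i)))
                              (Cmp C (i2 (Suc i)) (Cmp C (f (Suc i)) (p1 i))))
                        (Cmp C (i2 (Suc i)) (Cmp C (dY i) (p2 i)))) \<and>
        dM n = Add C (Cmp C (f (Suc n)) (p1 n)) (Cmp C (dY n) (p2 n)))"

text \<open>Mapping cocone of g : Y \<rightarrow> X with g_(n+1) = 1:
  Y_0 \<rightarrow> Y_1 (+) X_0 \<rightarrow> ... \<rightarrow> Y_n (+) X_(n-1) \<rightarrow> X_n,
  differentials [-d^Y_0; g_0], [[-d^Y_i, 0],[g_i, d^X_(i-1)]], [g_n, d^X_(n-1)].\<close>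
definition is_cocone :: "nat \<Rightarrow> ('o,'m,'x) addcat_scheme \<Rightarrow> (nat \<Rightarrow> 'o) \<Rightarrow> (nat \<Rightarrow> 'm)
    \<Rightarrow> (nat \<Rightarrow> 'o) \<Rightarrow> (nat \<Rightarrow> 'm) \<Rightarrow> (nat \<Rightarrow> 'm) \<Rightarrow> (nat \<Rightarrow> 'o) \<Rightarrow> (nat \<Rightarrow> 'm) \<Rightarrow> bool" where
  "is_cocone n C Y dY X dX g M dM \<longleftrightarrow>
     (\<exists>i1 i2 p1 p2. M 0 = Y 0 \<and> M (Suc n) = X n \<and>
        (\<forall>i. 1 \<le> i \<and> i \<le> n \<longrightarrow> biproduct C (M i) (Y i) (X (i - 1)) (i1 i) (i2 i) (p1 i) (p2 i)) \<and>
        dM 0 = Add C (Cmp C (i1 1) (Neg C (dY 0))) (Cmp C (i2 1) (g 0)) \<and>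
        (\<forall>i. 1 \<le> i \<and> i < n \<longrightarrow>
           dM i = Add C (Add C (Cmp C (i1 (Suc i)) (Cmp C (Neg C (dY i)) (p1 i)))
                              (Cmp C (i2 (Suc i)) (Cmp C (g i) (p1 i))))
                        (Cmp C (i2 (Suc i)) (Cmp C (dX (i - 1)) (p2 i)))) \<and>
        dM n = Add C (Cmp C (g n) (p1 n)) (Cmp C (dX (n - 1)) (p2 n)))"

definition EA2 :: "nat \<Rightarrow> ('o,'m,'x) addcat_scheme \<Rightarrow> ('o,'m,'e,'y) extb_scheme \<Rightarrow> ('e,'o,'m) realisation \<Rightarrow> bool" where
  "EA2 n C E s \<longleftrightarrow>
     (\<forall>\<delta>\<in>Ext E. \<forall>Z c. c \<in> hom C Z (Src E \<delta>) \<longrightarrow>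
        (\<forall>X dX Y dY. s (Pull E c \<delta>) X dX \<longrightarrow> s \<delta> Y dY \<longrightarrow>
           (\<exists>f. cx_morph n C X dX Y dY f \<and> f 0 = Idm C (Tgt E \<delta>) \<and> f (Suc n) = c \<and>
              (\<exists>M dM. is_cone n C X dX Y dY f M dM \<and> s (Push E (dX 0) \<delta>) M dM))))"

definition EA2op :: "nat \<Rightarrow> ('o,'m,'x) addcat_scheme \<Rightarrow> ('o,'m,'e,'y) extb_scheme \<Rightarrow> ('e,'o,'m) realisation \<Rightarrow> bool" where
  "EA2op n C E s \<longleftrightarrow>
     (\<forall>\<delta>\<in>Ext E. \<forall>B a. a \<in> hom C (Tgt E \<delta>) B \<longrightarrow>
        (\<forall>X dX Y dY. s (Push E a \<delta>) X dX \<longrightarrow> s \<delta> Y dY \<longrightarrow>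
           (\<exists>g. cx_morph n C Y dY X dX g \<and> g 0 = a \<and> g (Suc n) = Idm C (Src E \<delta>) \<and>
              (\<exists>M dM. is_cocone n C Y dY X dX g M dM \<and> s (Pull E (dX n) \<delta>) M dM))))"

definition nexangulated :: "nat \<Rightarrow> ('o,'m,'x) addcat_scheme \<Rightarrow> ('o,'m,'e,'y) extb_scheme \<Rightarrow> ('e,'o,'m) realisation \<Rightarrow> bool" where
  "nexangulated n C E s \<longleftrightarrow> 1 \<le> n \<and> additive C \<and> biadditive C E \<and>
     is_realisation n C E s \<and> R0 n C E s \<and> R1 n C E s \<and> R2 n C E s \<and>
     EA1 n C E s \<and> EA2 n C E s \<and> EA2op n C E s"

record ('o1,'m1,'o2,'m2) ftor =
  FO :: "'o1 \<Rightarrow> 'o2"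
  FM :: "'m1 \<Rightarrow> 'm2"

definition is_functor :: "('o1,'m1,'x) cat_scheme \<Rightarrow> ('o2,'m2,'y) cat_scheme \<Rightarrow> ('o1,'m1,'o2,'m2) ftor \<Rightarrow> bool" where
  "is_functor C D F \<longleftrightarrow>
     (\<forall>X\<in>Obj C. FO F X \<in> Obj D) \<and>
     (\<forall>X Y f. f \<in> hom C X Y \<longrightarrow> FM F f \<in> hom D (FO F X) (FO F Y)) \<and>
     (\<forall>X\<in>Obj C. FM F (Idm C X) = Idm D (FO F X)) \<and>
     (\<forall>X Y Z f g. f \<in> hom C X Y \<longrightarrow> g \<in> hom C Y Z \<longrightarrow> FM F (Cmp C g f) = Cmp D (FM F g) (FM F f))"

definition additive_functor :: "('o1,'m1,'x) addcat_scheme \<Rightarrow> ('o2,'m2,'y) addcat_scheme \<Rightarrow> ('o1,'m1,'o2,'m2) ftor \<Rightarrow> bool" where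
  "additive_functor C D F \<longleftrightarrow> is_functor C D F \<and>
     (\<forall>X Y f g. f \<in> hom C X Y \<longrightarrow> g \<in> hom C X Y \<longrightarrow> FM F (Add C f g) = Add D (FM F f) (FM F g))"

definition is_nat_trans :: "('o1,'m1,'x) cat_scheme \<Rightarrow> ('o2,'m2,'y) cat_scheme
    \<Rightarrow> ('o1,'m1,'o2,'m2) ftor \<Rightarrow> ('o1,'m1,'o2,'m2) ftor \<Rightarrow> ('o1 \<Rightarrow> 'm2) \<Rightarrow> bool" where
  "is_nat_trans C D F G \<theta> \<longleftrightarrow> is_functor C D F \<and> is_functor C D G \<and>
     (\<forall>X\<in>Obj C. \<theta> X \<in> hom D (FO F X) (FO G X)) \<and>
     (\<forall>X Y f. f \<in> hom C X Y \<longrightarrow> Cmp D (\<theta> Y) (FM F f) = Cmp D (FM G f) (\<theta> X))"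

definition nexang_functor :: "nat \<Rightarrow> ('o1,'m1,'x) addcat_scheme \<Rightarrow> ('o1,'m1,'e1,'y) extb_scheme \<Rightarrow> ('e1,'o1,'m1) realisation
    \<Rightarrow> ('o2,'m2,'z) addcat_scheme \<Rightarrow> ('o2,'m2,'e2,'w) extb_scheme \<Rightarrow> ('e2,'o2,'m2) realisation
    \<Rightarrow> ('o1,'m1,'o2,'m2) ftor \<Rightarrow> ('e1 \<Rightarrow> 'e2) \<Rightarrow> bool" where
  "nexang_functor n C E s D EF t F \<Gamma> \<longleftrightarrow> additive_functor C D F \<and>
     (\<forall>\<alpha>\<in>Ext E. \<Gamma> \<alpha> \<in> ext EF (FO F (Src E \<alpha>)) (FO F (Tgt E \<alpha>))) \<and>
     (\<forall>X\<in>Obj C. \<forall>A\<in>Obj C. \<forall>\<alpha>\<in>ext E X A. \<forall>\<beta>\<in>ext E X A. \<Gamma> (EAdd E \<alpha> \<beta>) = EAdd EF (\<Gamma> \<alpha>) (\<Gamma> \<beta>)) \<and>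
     (\<forall>A B X a \<alpha>. a \<in> hom C A B \<longrightarrow> \<alpha> \<in> ext E X A \<longrightarrow> \<Gamma> (Push E a \<alpha>) = Push EF (FM F a) (\<Gamma> \<alpha>)) \<and>
     (\<forall>A X Y c \<alpha>. c \<in> hom C Y X \<longrightarrow> \<alpha> \<in> ext E X A \<longrightarrow> \<Gamma> (Pull E c \<alpha>) = Pull EF (FM F c) (\<Gamma> \<alpha>)) \<and>
     (\<forall>\<delta>\<in>Ext E. \<forall>X d. s \<delta> X d \<longrightarrow> t (\<Gamma> \<delta>) (FO F \<circ> X) (FM F \<circ> d))"

definition nexang_nat_trans :: "('o1,'m1,'x) addcat_scheme \<Rightarrow> ('o1,'m1,'e1,'y) extb_scheme
    \<Rightarrow> ('o2,'m2,'z) addcat_scheme \<Rightarrow> ('o2,'m2,'e2,'w) extb_scheme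
    \<Rightarrow> ('o1,'m1,'o2,'m2) ftor \<Rightarrow> ('e1 \<Rightarrow> 'e2) \<Rightarrow> ('o1,'m1,'o2,'m2) ftor \<Rightarrow> ('e1 \<Rightarrow> 'e2) \<Rightarrow> ('o1 \<Rightarrow> 'm2) \<Rightarrow> bool" where
  "nexang_nat_trans C E D EF F \<Gamma> G \<Lambda> \<beta> \<longleftrightarrow> is_nat_trans C D F G \<beta> \<and>
     (\<forall>\<alpha>\<in>Ext E. Push EF (\<beta> (Tgt E \<alpha>)) (\<Gamma> \<alpha>) = Pull EF (\<beta> (Src E \<alpha>)) (\<Lambda> \<alpha>))"

definition hcomp :: "('o3,'m3,'x) cat_scheme \<Rightarrow> ('o2 \<Rightarrow> 'm3) \<Rightarrow> ('o2,'m2,'o3,'m3) ftor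
    \<Rightarrow> ('o1,'m1,'o2,'m2) ftor \<Rightarrow> ('o1 \<Rightarrow> 'm2) \<Rightarrow> 'o1 \<Rightarrow> 'm3" where
  "hcomp M dal L K \<theta> X = Cmp M (dal (FO K X)) (FM L (\<theta> X))"

definition idnt :: "('o2,'m2,'x) cat_scheme \<Rightarrow> ('o1,'m1,'o2,'m2) ftor \<Rightarrow> 'o1 \<Rightarrow> 'm2" where
  "idnt D F X = Idm D (FO F X)"

section \<open>The category E-Ext(C)\<close>

text \<open>Objects: alpha in E(C,A). A morphism (a,c) : alpha \<rightarrow> beta is encoded as (beta, (a,c), alpha).\<close>
definition EExt :: "('o,'m,'x) cat_scheme \<Rightarrow> ('o,'m,'e,'y) extb_scheme \<Rightarrow> ('e, 'e \<times> ('m \<times> 'm) \<times> 'e) cat" where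
  "EExt C E = \<lparr> Obj = Ext E,
     Mor = {(\<beta>, (a, c), \<alpha>) | \<beta> a c \<alpha>. \<alpha> \<in> Ext E \<and> \<beta> \<in> Ext E \<and>
              a \<in> hom C (Tgt E \<alpha>) (Tgt E \<beta>) \<and> c \<in> hom C (Src E \<alpha>) (Src E \<beta>) \<and>
              Push E a \<alpha> = Pull E c \<beta>},
     Dom = (\<lambda>(\<beta>, ac, \<alpha>). \<alpha>),
     Cod = (\<lambda>(\<beta>, ac, \<alpha>). \<beta>),
     Idm = (\<lambda>\<alpha>. (\<alpha>, (Idm C (Tgt E \<alpha>), Idm C (Src E \<alpha>)), \<alpha>)),
     Cmp = (\<lambda>(\<gamma>, (b, d), \<beta>') (\<beta>, (a, c), \<alpha>). (\<gamma>, (Cmp C b a, Cmp C d c), \<alpha>)) \<rparr>"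

definition E_fun :: "('o1,'m1,'o2,'m2) ftor \<Rightarrow> ('e1 \<Rightarrow> 'e2)
    \<Rightarrow> ('e1, 'e1 \<times> ('m1 \<times> 'm1) \<times> 'e1, 'e2, 'e2 \<times> ('m2 \<times> 'm2) \<times> 'e2) ftor" where
  "E_fun F \<Gamma> = \<lparr> FO = \<Gamma>, FM = (\<lambda>(\<beta>, (a, c), \<alpha>). (\<Gamma> \<beta>, (FM F a, FM F c), \<Gamma> \<alpha>)) \<rparr>"

definition angle :: "('o1,'m1,'e1,'y) extb_scheme \<Rightarrow> ('o1 \<Rightarrow> 'm2) \<Rightarrow> ('e1 \<Rightarrow> 'e2) \<Rightarrow> ('e1 \<Rightarrow> 'e2)
    \<Rightarrow> 'e1 \<Rightarrow> 'e2 \<times> ('m2 \<times> 'm2) \<times> 'e2" where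
  "angle E \<beta> \<Gamma> \<Lambda> \<alpha> = (\<Lambda> \<alpha>, (\<beta> (Tgt E \<alpha>), \<beta> (Src E \<alpha>)), \<Gamma> \<alpha>)"

section \<open>Idempotent completion\<close>

definition idem_obs :: "('o,'m,'x) cat_scheme \<Rightarrow> ('o \<times> 'm) set" where
  "idem_obs C = {(X, e). X \<in> Obj C \<and> e \<in> hom C X X \<and> Cmp C e e = e}"

definition IC :: "('o,'m,'x) cat_scheme \<Rightarrow> ('o \<times> 'm, 'm \<times> 'm \<times> 'm) cat" where
  "IC C = \<lparr> Obj = idem_obs C,
     Mor = {(eY, f, eX). (Dom C eX, eX) \<in> idem_obs C \<and> (Dom C eY, eY) \<in> idem_obs C \<and>
              f \<in> hom C (Dom C eX) (Dom C eY) \<and> Cmp C f eX = f \<and> Cmp C eY f = f},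
     Dom = (\<lambda>(eY, f, eX). (Dom C eX, eX)),
     Cod = (\<lambda>(eY, f, eX). (Dom C eY, eY)),
     Idm = (\<lambda>(X, e). (e, e, e)),
     Cmp = (\<lambda>(eZ, g, eY') (eY, f, eX). (eZ, Cmp C g f, eX)) \<rparr>"

definition IC_ftor :: "('o1,'m1,'o2,'m2) ftor \<Rightarrow> ('o1 \<times> 'm1, 'm1 \<times> 'm1 \<times> 'm1, 'o2 \<times> 'm2, 'm2 \<times> 'm2 \<times> 'm2) ftor" where
  "IC_ftor H = \<lparr> FO = (\<lambda>(X, e). (FO H X, FM H e)),
                 FM = (\<lambda>(eY, f, eX). (FM H eY, FM H f, FM H eX)) \<rparr>"

definition IC_nt :: "('o2,'m2,'x) cat_scheme \<Rightarrow> ('o1,'m1,'o2,'m2) ftor \<Rightarrow> ('o1,'m1,'o2,'m2) ftor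
    \<Rightarrow> ('o1 \<Rightarrow> 'm2) \<Rightarrow> 'o1 \<times> 'm1 \<Rightarrow> 'm2 \<times> 'm2 \<times> 'm2" where
  "IC_nt D H K \<theta> = (\<lambda>(X, e). (FM K e, Cmp D (FM K e) (Cmp D (\<theta> X) (FM H e)), FM H e))"

text \<open>The extension functor E~ on the idempotent completion (Klapproth--Msapato--Shah).\<close>
definition IC_ext :: "('o,'m,'x) cat_scheme \<Rightarrow> ('o,'m,'e,'y) extb_scheme \<Rightarrow> ('o \<times> 'm, 'm \<times> 'm \<times> 'm, 'm \<times> 'e \<times> 'm) extb" where
  "IC_ext C E = \<lparr> Ext = {(eA, \<alpha>, eC). \<alpha> \<in> Ext E \<and> (Tgt E \<alpha>, eA) \<in> idem_obs C \<and> (Src E \<alpha>, eC) \<in> idem_obs C \<and>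
                           Push E eA \<alpha> = \<alpha> \<and> Pull E eC \<alpha> = \<alpha>},
     Src = (\<lambda>(eA, \<alpha>, eC). (Src E \<alpha>, eC)),
     Tgt = (\<lambda>(eA, \<alpha>, eC). (Tgt E \<alpha>, eA)),
     EAdd = (\<lambda>(eA, \<alpha>, eC) (eA', \<beta>, eC'). (eA, EAdd E \<alpha> \<beta>, eC)),
     EZer = (\<lambda>(X, eC) (A, eA). (eA, EZer E X A, eC)),
     ENeg = (\<lambda>(eA, \<alpha>, eC). (eA, ENeg E \<alpha>, eC)),
     Push = (\<lambda>(eB, a, eA') (eA, \<alpha>, eC). (eB, Push E a \<alpha>, eC)),
     Pull = (\<lambda>(eC', c, eD) (eA, \<alpha>, eC). (eA, Pull E c \<alpha>, eD)) \<rparr>"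

definition IC_Gamma :: "('o1,'m1,'o2,'m2) ftor \<Rightarrow> ('e1 \<Rightarrow> 'e2) \<Rightarrow> 'm1 \<times> 'e1 \<times> 'm1 \<Rightarrow> 'm2 \<times> 'e2 \<times> 'm2" where
  "IC_Gamma F \<Gamma> = (\<lambda>(eA, \<alpha>, eC). (FM F eA, \<Gamma> \<alpha>, FM F eC))"

section \<open>The functor Shin : E~-Ext(C~) \<rightarrow> (E-Ext(C))~\<close>

definition Shin :: "('m \<times> 'e \<times> 'm,
      ('m \<times> 'e \<times> 'm) \<times> (('m \<times> 'm \<times> 'm) \<times> ('m \<times> 'm \<times> 'm)) \<times> ('m \<times> 'e \<times> 'm),
      'e \<times> ('e \<times> ('m \<times> 'm) \<times> 'e),
      ('e \<times> ('m \<times> 'm) \<times> 'e) \<times> ('e \<times> ('m \<times> 'm) \<times> 'e) \<times> ('e \<times> ('m \<times> 'm) \<times> 'e)) ftor" where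
  "Shin = \<lparr> FO = (\<lambda>(eA, \<alpha>, eC). (\<alpha>, (\<alpha>, (eA, eC), \<alpha>))),
            FM = (\<lambda>((eB', \<beta>, eD'), ((eB, a, eA), (eD, c, eC)), (eA', \<alpha>, eC')).
                     ((\<beta>, (eB, eD), \<beta>), (\<beta>, (a, c), \<alpha>), (\<alpha>, (eA, eC), \<alpha>))) \<rparr>"

end

theory Submission
  imports Defs
begin

(* At an object (e_A, alpha, e_C) both composites have codomain G~(e), domain F~(e), and in
   each coordinate the same middle morphism G(e) o beth o F(e) up to one extra idempotent factor:
   followed by F(e) on the left, preceded by G(e) on the right. Functors preserve idempotents,
   so G(e) o beth o F(e) is a morphism of the idempotent completion and absorbs both factors. *)

lemma functor_preserves_idem_obs:
  assumes "is_functor C D F" and "(X, e) \<in> idem_obs C"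
  shows "(FO F X, FM F e) \<in> idem_obs D"
proof -
  from assms(2) have X: "X \<in> Obj C" and e: "e \<in> hom C X X" and ee: "Cmp C e e = e"
    by (auto simp: idem_obs_def)
  have "FM F e \<in> hom D (FO F X) (FO F X)" and "FO F X \<in> Obj D"
    using assms(1) X e by (auto simp: is_functor_def)
  moreover have "Cmp D (FM F e) (FM F e) = FM F e"
    using assms(1) e ee unfolding is_functor_def by metis
  ultimately show ?thesis by (simp add: idem_obs_def)
qed

lemma idempotent_sandwich_in_IC_Mor:
  assumes "category D" and p: "(X, p) \<in> idem_obs D" and q: "(Y, q) \<in> idem_obs D"
    and f: "f \<in> hom D X Y"
  shows "(q, Cmp D q (Cmp D f p), p) \<in> Mor (IC D)"
proof -
  from p q have p_hom: "p \<in> hom D X X" and pp: "Cmp D p p = p"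
    and q_hom: "q \<in> hom D Y Y" and qq: "Cmp D q q = q"
    by (auto simp: idem_obs_def)
  have fp: "Cmp D f p \<in> hom D X Y"
    using assms(1) p_hom f unfolding category_def by blast
  have qfp: "Cmp D q (Cmp D f p) \<in> hom D X Y"
    using assms(1) fp q_hom unfolding category_def by blast
  have "Cmp D (Cmp D q (Cmp D f p)) p = Cmp D q (Cmp D (Cmp D f p) p)"
    using assms(1) p_hom fp q_hom unfolding category_def by metis
  also have "Cmp D (Cmp D f p) p = Cmp D f (Cmp D p p)"
    using assms(1) p_hom f unfolding category_def by metis
  finally have right: "Cmp D (Cmp D q (Cmp D f p)) p = Cmp D q (Cmp D f p)"
    using pp by simp
  have "Cmp D q (Cmp D q (Cmp D f p)) = Cmp D (Cmp D q q) (Cmp D f p)"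
    using assms(1) fp q_hom unfolding category_def by metis
  then have left: "Cmp D q (Cmp D q (Cmp D f p)) = Cmp D q (Cmp D f p)"
    using qq by simp
  have "Dom D p = X" "Dom D q = Y"
    using p_hom q_hom by (auto simp: hom_def)
  then show ?thesis
    using p q qfp left right by (simp add: IC_def)
qed

lemma IC_nt_in_IC_Mor:
  assumes "category D" and "is_nat_trans C D F G \<theta>" and "(X, e) \<in> idem_obs C"
  shows "IC_nt D F G \<theta> (X, e) \<in> Mor (IC D)"
proof -
  have F: "is_functor C D F" and G: "is_functor C D G"
    and \<theta>: "\<theta> X \<in> hom D (FO F X) (FO G X)"
    using assms(2,3) by (auto simp: is_nat_trans_def idem_obs_def)
  show ?thesis
    using idempotent_sandwich_in_IC_Mor[OF assms(1) functor_preserves_idem_obs[OF F assms(3)]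
        functor_preserves_idem_obs[OF G assms(3)] \<theta>]
    by (simp add: IC_nt_def)
qed

lemma hcomp_IC_nt_Shin_eq:
  assumes "category D" and "is_nat_trans C D F G \<beta>"
    and "X \<in> Obj (EExt (IC C) (IC_ext C E))"
  shows "hcomp (IC (EExt D EF))
                 (IC_nt (EExt D EF) (E_fun F \<Gamma>) (E_fun G \<Lambda>) (angle E \<beta> \<Gamma> \<Lambda>))
                 (IC_ftor (E_fun F \<Gamma>)) Shin
                 (idnt (IC (EExt C E)) Shin) X
         = hcomp (IC (EExt D EF))
                 (idnt (IC (EExt D EF)) Shin) Shin
                 (E_fun (IC_ftor G) (IC_Gamma G \<Lambda>))
                 (angle (IC_ext C E) (IC_nt D F G \<beta>) (IC_Gamma F \<Gamma>) (IC_Gamma G \<Lambda>)) X"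
proof -
  obtain eA \<alpha> eC where X: "X = (eA, \<alpha>, eC)"
    and eA_idem: "(Tgt E \<alpha>, eA) \<in> idem_obs C" and eC_idem: "(Src E \<alpha>, eC) \<in> idem_obs C"
    using assms(3) by (auto simp: EExt_def IC_ext_def)
  have "IC_nt D F G \<beta> (Tgt E \<alpha>, eA) \<in> Mor (IC D)"
    and "IC_nt D F G \<beta> (Src E \<alpha>, eC) \<in> Mor (IC D)"
    using IC_nt_in_IC_Mor[OF assms(1,2) eA_idem] IC_nt_in_IC_Mor[OF assms(1,2) eC_idem] by blast+
  then show ?thesis
    by (simp add: X hcomp_def idnt_def IC_def IC_nt_def IC_ftor_def E_fun_def angle_def Shin_def
        IC_Gamma_def IC_ext_def EExt_def)
qed

theorem proposition5p3:
  fixes n :: nat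
    and C :: "('a, 'm) addcat" and E :: "('a, 'm, 'e) extb" and s :: "('e, 'a, 'm) realisation"
    and D :: "('b, 'n) addcat" and EF :: "('b, 'n, 'f) extb" and t :: "('f, 'b, 'n) realisation"
    and F G :: "('a, 'm, 'b, 'n) ftor" and \<Gamma> \<Lambda> :: "'e \<Rightarrow> 'f" and beth :: "'a \<Rightarrow> 'n"
  assumes "nexangulated n C E s"
    and "nexangulated n D EF t"
    and "nexang_functor n C E s D EF t F \<Gamma>"
    and "nexang_functor n C E s D EF t G \<Lambda>"
    and "nexang_nat_trans C E D EF F \<Gamma> G \<Lambda> beth"
  shows "\<forall>X \<in> Obj (EExt (IC C) (IC_ext C E)).
           hcomp (IC (EExt D EF))
                 (IC_nt (EExt D EF) (E_fun F \<Gamma>) (E_fun G \<Lambda>) (angle E beth \<Gamma> \<Lambda>))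
                 (IC_ftor (E_fun F \<Gamma>)) Shin
                 (idnt (IC (EExt C E)) Shin) X
         = hcomp (IC (EExt D EF))
                 (idnt (IC (EExt D EF)) Shin) Shin
                 (E_fun (IC_ftor G) (IC_Gamma G \<Lambda>))
                 (angle (IC_ext C E) (IC_nt D F G beth) (IC_Gamma F \<Gamma>) (IC_Gamma G \<Lambda>)) X"
proof -
  have "category D"
    using assms(2) by (simp add: nexangulated_def additive_def)
  moreover have "is_nat_trans C D F G beth"
    using assms(5) by (simp add: nexang_nat_trans_def)
  ultimately show ?thesis
    using hcomp_IC_nt_Shin_eq by blast
qed

end
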